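(* Let $1\le j\le d$ and let $X$ be a $d\times d$ positive semidefinite matrix of rank at least $j$. Then there exists a $d\times d$ matrix $W\succ 0$ such that $-X\in\partial\Delta_j(W)$ and $\Gamma_j(X)=\Delta_j(W)$.
   Context: For $x\in\mathbb{R}^d_{+}$ let $x_{(i)}$ denote its $i$-th largest coordinate. For $W\succ 0$ with eigenvalues $\lambda_1\le\dots\le\lambda_d$, $\Delta_j(W)\coloneqq-\sum_{i=1}^j\ln\lambda_i$. For $x\in\mathbb{R}^d_+$, let $k$ be the unique integer with $0\le k\le j-1$ such that $x_{(k)}>\frac{1}{j-k}\sum_{i>k}x_{(i)}\ge x_{(k+1)}$ (with $x_{(0)}=\infty$; such $k$ exists and is unique), and define $\gamma_j(x)\coloneqq\sum_{i=1}^k\ln x_{(i)}+(j-k)\ln\big(\frac{1}{j-k}\sum_{i=k+1}^d x_{(i)}\big)$, with $\ln 0=-\infty$. For $X\succeq 0$ with eigenvalue vector $\lambda$, $\Gamma_j(X)\coloneqq\gamma_j(\lambda)$. The subdifferential $\partial\Delta_j(W)$ is taken in the space of symmetric matrices with the trace inner product: $Y\in\partial\Delta_j(W)$ iff $\Delta_j(Z)\ge\Delta_j(W)+\mathrm{tr}((Z-W)Y)$ for all $Z\succ 0$. *)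

theory Defs
  imports "Jordan_Normal_Form.DL_Rank_Submatrix" "Jordan_Normal_Form.Char_Poly"
    "HOL-Library.Extended_Real"
begin

definition mat_trace :: "real mat \<Rightarrow> real" where
  "mat_trace A = (\<Sum>i<dim_row A. A $$ (i, i))"

definition sym_mat :: "nat \<Rightarrow> real mat \<Rightarrow> bool" where
  "sym_mat d A \<longleftrightarrow> A \<in> carrier_mat d d \<and> A\<^sup>T = A"

definition psd_mat :: "nat \<Rightarrow> real mat \<Rightarrow> bool" where
  "psd_mat d A \<longleftrightarrow> sym_mat d A \<and> (\<forall>v \<in> carrier_vec d. v \<bullet> (A *\<^sub>v v) \<ge> 0)"

definition pd_mat :: "nat \<Rightarrow> real mat \<Rightarrow> bool" where
  "pd_mat d A \<longleftrightarrow> sym_mat d A \<and> (\<forall>v \<in> carrier_vec d. v \<noteq> 0\<^sub>v d \<longrightarrow> v \<bullet> (A *\<^sub>v v) > 0)"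

definition eigvals :: "real mat \<Rightarrow> real list" where
  "eigvals A = (THE xs. sorted xs \<and> length xs = dim_row A \<and>
       char_poly A = (\<Prod>a\<leftarrow>xs. [:- a, 1:]))"

definition Delta :: "nat \<Rightarrow> real mat \<Rightarrow> real" where
  "Delta j W = - (\<Sum>i<j. ln (eigvals W ! i))"

definition eln :: "real \<Rightarrow> ereal" where
  "eln x = (if x = 0 then - \<infinity> else ereal (ln x))"

(* x_(i): i-th largest coordinate, 1-based *)
definition ord_coord :: "real list \<Rightarrow> nat \<Rightarrow> real" where
  "ord_coord x i = rev (sort x) ! (i - 1)"

(* the unique k with 0 <= k <= j-1 and
   x_(k) > 1/(j-k) sum_{i>k} x_(i) >= x_(k+1), with x_(0) = infinity *)
definition gamma_k :: "nat \<Rightarrow> real list \<Rightarrow> nat" where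
  "gamma_k j x = (THE k. k \<le> j - 1 \<and>
      (k = 0 \<or> ord_coord x k > (\<Sum>i\<in>{k<..length x}. ord_coord x i) / real (j - k)) \<and>
      (\<Sum>i\<in>{k<..length x}. ord_coord x i) / real (j - k) \<ge> ord_coord x (k + 1))"

definition gamma :: "nat \<Rightarrow> real list \<Rightarrow> ereal" where
  "gamma j x = (let k = gamma_k j x in
      (\<Sum>i\<in>{1..k}. eln (ord_coord x i))
      + ereal (real (j - k)) * eln ((\<Sum>i\<in>{k<..length x}. ord_coord x i) / real (j - k)))"

definition Gamma :: "nat \<Rightarrow> real mat \<Rightarrow> ereal" where
  "Gamma j X = gamma j (eigvals X)"

definition subdiff_Delta :: "nat \<Rightarrow> nat \<Rightarrow> real mat \<Rightarrow> real mat set" where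
  "subdiff_Delta d j W = {Y. sym_mat d Y \<and>
      (\<forall>Z. pd_mat d Z \<longrightarrow> Delta j Z \<ge> Delta j W + mat_trace ((Z - W) * Y))}"

end

theory Submission
  imports Defs "Jordan_Normal_Form.Schur_Decomposition"
begin

text \<open>Diagonalise \<open>X = U diag(x) U\<^sup>T\<close> with \<open>x\<^sub>1 \<ge> \<dots> \<ge> x\<^sub>d \<ge> 0\<close>, where \<open>x\<^sub>j > 0\<close> by the rank
  assumption, and let \<open>k\<close> and \<open>a = (\<Sum>\<^sub>i\<^sub>>\<^sub>k x\<^sub>i)/(j - k)\<close> be as in the definition of \<open>\<gamma>\<^sub>j\<close>. The
  certificate is \<open>W = U diag(1/x\<^sub>1, \<dots>, 1/x\<^sub>k, 1/a, \<dots>, 1/a) U\<^sup>T\<close>: the choice of \<open>k\<close> makes these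
  eigenvalues increasing, so \<open>\<Delta>\<^sub>j(W) = \<Sum>\<^sub>i\<^sub>\<le>\<^sub>k ln x\<^sub>i + (j - k) ln a = \<Gamma>\<^sub>j(X)\<close>, and \<open>tr(WX) = j\<close>.
  The subgradient inequality at \<open>Z \<succ> 0\<close> with increasing eigenvalues \<open>\<mu>\<close> thus reads
  \<open>tr(ZX) \<ge> j + \<Sum>\<^sub>i\<^sub>\<le>\<^sub>j ln \<mu>\<^sub>i + \<Gamma>\<^sub>j(X)\<close>. Since \<open>tr(ZX) = \<Sum>\<^sub>l\<^sub>m \<mu>\<^sub>l x\<^sub>m \<langle>v\<^sub>l, u\<^sub>m\<rangle>\<^sup>2\<close> and the squared
  overlaps of two orthonormal bases form a doubly stochastic matrix, a rearrangement argument gives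
  \<open>tr(ZX) \<ge> \<Sum>\<^sub>i \<mu>\<^sub>i x\<^sub>i\<close>, and the remaining scalar inequality follows from \<open>1 + ln t \<le> t\<close>.\<close>

section \<open>Orthogonal diagonalisation of real symmetric matrices\<close>

definition diag_of_list :: "real list \<Rightarrow> real mat" where
  "diag_of_list es = mat (length es) (length es) (\<lambda>(i, j). if i = j then es ! i else 0)"

definition orth_mat :: "nat \<Rightarrow> real mat \<Rightarrow> bool" where
  "orth_mat n U \<longleftrightarrow> U \<in> carrier_mat n n \<and> U\<^sup>T * U = 1\<^sub>m n \<and> U * U\<^sup>T = 1\<^sub>m n"

lemma diag_of_list_carrier [simp]: "diag_of_list es \<in> carrier_mat (length es) (length es)"
  and dim_diag_of_list [simp]: "dim_row (diag_of_list es) = length es" "dim_col (diag_of_list es) = length es"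
  unfolding diag_of_list_def by auto

lemma transpose_diag_of_list [simp]: "(diag_of_list es)\<^sup>T = diag_of_list es"
  by (rule eq_matI) (auto simp: diag_of_list_def)

lemma diag_of_list_Cons:
  "diag_of_list (e # es) =
     four_block_mat (mat 1 1 (\<lambda>_. e)) (0\<^sub>m 1 (length es)) (0\<^sub>m (length es) 1) (diag_of_list es)"
  by (rule eq_matI) (auto simp: diag_of_list_def)

lemma conjugate_real_vec [simp]: "conjugate (v :: real vec) = v"
  by (rule eq_vecI) auto

lemma orth_mat_carrier: "orth_mat n U \<Longrightarrow> U \<in> carrier_mat n n"
  unfolding orth_mat_def by simp

lemma orth_mat_mult:
  assumes "orth_mat n U" "orth_mat n V"
  shows "orth_mat n (U * V)"
proof -
  have U: "U \<in> carrier_mat n n" "U\<^sup>T * U = 1\<^sub>m n" "U * U\<^sup>T = 1\<^sub>m n"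
    and V: "V \<in> carrier_mat n n" "V\<^sup>T * V = 1\<^sub>m n" "V * V\<^sup>T = 1\<^sub>m n"
    using assms unfolding orth_mat_def by auto
  have t: "(U * V)\<^sup>T = V\<^sup>T * U\<^sup>T" by (rule transpose_mult[OF U(1) V(1)])
  have "U\<^sup>T * (U * V) = V" using assoc_mult_mat[of "U\<^sup>T" n n U n V n] U V by simp
  then have "(U * V)\<^sup>T * (U * V) = 1\<^sub>m n"
    unfolding t using U V by (simp add: assoc_mult_mat[of _ n n _ n _ n])
  moreover have "V * (V\<^sup>T * U\<^sup>T) = U\<^sup>T" using assoc_mult_mat[of V n n "V\<^sup>T" n "U\<^sup>T" n] U V by simp
  then have "(U * V) * (U * V)\<^sup>T = 1\<^sub>m n"
    unfolding t using U V by (simp add: assoc_mult_mat[of _ n n _ n _ n])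
  ultimately show ?thesis using U V unfolding orth_mat_def by auto
qed

lemma orth_mat_one_block:
  assumes "orth_mat m P"
  shows "orth_mat (Suc m) (four_block_mat (1\<^sub>m 1) (0\<^sub>m 1 m) (0\<^sub>m m 1) P)"
proof -
  have P: "P \<in> carrier_mat m m" "P\<^sup>T * P = 1\<^sub>m m" "P * P\<^sup>T = 1\<^sub>m m"
    using assms unfolding orth_mat_def by auto
  let ?B = "four_block_mat (1\<^sub>m 1) (0\<^sub>m 1 m) (0\<^sub>m m 1) P"
  have t: "?B\<^sup>T = four_block_mat (1\<^sub>m 1) (0\<^sub>m 1 m) (0\<^sub>m m 1) P\<^sup>T"
    using P by (subst transpose_four_block_mat) auto
  have "?B \<in> carrier_mat (1 + m) (1 + m)" using P by (intro four_block_carrier_mat) auto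
  moreover have "?B\<^sup>T * ?B = 1\<^sub>m (1 + m)" "?B * ?B\<^sup>T = 1\<^sub>m (1 + m)"
    unfolding t using P by (subst mult_four_block_mat; auto)+
  ultimately show ?thesis unfolding orth_mat_def by simp
qed

lemma transpose_congruence:
  fixes A W :: "real mat"
  assumes "A \<in> carrier_mat n n" "W \<in> carrier_mat n m" "A\<^sup>T = A"
  shows "(W\<^sup>T * A * W)\<^sup>T = W\<^sup>T * A * W"
proof -
  have "(W\<^sup>T * A * W)\<^sup>T = W\<^sup>T * (W\<^sup>T * A)\<^sup>T"
    by (rule transpose_mult[of "W\<^sup>T * A" m n W m]) (use assms in auto)
  also have "(W\<^sup>T * A)\<^sup>T = A\<^sup>T * W" using transpose_mult[of "W\<^sup>T" m n A n] assms by simp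
  finally show ?thesis using assms by (simp add: assoc_mult_mat[of _ m n _ n _ m])
qed

lemma orthonormal_basis_extending:
  fixes v :: "real vec"
  assumes v: "v \<in> carrier_vec n" and vv: "v \<bullet> v = 1"
  shows "\<exists>ws. length ws = n \<and> set ws \<subseteq> carrier_vec n \<and> ws ! 0 = v \<and>
    (\<forall>i<n. \<forall>j<n. ws ! i \<bullet> ws ! j = (if i = j then 1 else 0))"
proof -
  have vnz: "v \<noteq> 0\<^sub>v n" using vv by auto
  then have "n \<noteq> 0" using v by auto
  interpret cof_vec_space n "TYPE(real)" .
  define b where "b = basis_completion v"
  from basis_completion[OF v vnz, folded b_def]
  have dist_b: "distinct b" and indep: "\<not> lin_dep (set b)" and bc: "set b \<subseteq> carrier_vec n"
    and hdb: "hd b = v" and len_b: "length b = n" by auto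
  with \<open>n \<noteq> 0\<close> obtain bs where bv: "b = v # bs" by (cases b) auto
  define ws0 where "ws0 = gram_schmidt n b"
  from gram_schmidt_result[OF bc dist_b indep ws0_def]
  have ws0: "corthogonal ws0" "set ws0 \<subseteq> carrier_vec n" "length ws0 = n" using len_b by auto
  have hd_ws0: "hd ws0 = v" unfolding ws0_def bv using v by simp
  have ws0_pos: "ws0 ! i \<bullet> ws0 ! i > 0" if i: "i < n" for i
  proof -
    have "ws0 ! i \<bullet>c ws0 ! i \<noteq> 0" using corthogonalD[OF ws0(1), of i i] ws0 i by auto
    moreover have "ws0 ! i \<bullet>c ws0 ! i \<ge> 0" by (rule conjugate_square_ge_0_vec)
    ultimately show ?thesis by simp
  qed
  define ws where "ws = map (\<lambda>w. (1 / sqrt (w \<bullet> w)) \<cdot>\<^sub>v w) ws0"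
  have "ws ! i \<bullet> ws ! j = (if i = j then 1 else 0)" if i: "i < n" and j: "j < n" for i j
  proof -
    have "ws0 ! i \<in> carrier_vec n" "ws0 ! j \<in> carrier_vec n" using ws0 i j by auto
    moreover have "ws0 ! i \<bullet> ws0 ! j = 0 \<longleftrightarrow> i \<noteq> j"
      using corthogonalD[OF ws0(1), of i j] ws0 i j by auto
    ultimately show ?thesis
      unfolding ws_def using i j ws0 ws0_pos[OF i]
      by (auto simp: smult_scalar_prod_distrib scalar_prod_smult_distrib)
  qed
  moreover have "ws ! 0 = v" unfolding ws_def using hd_ws0 ws0 \<open>n \<noteq> 0\<close> vv by (cases ws0) auto
  moreover have "length ws = n" "set ws \<subseteq> carrier_vec n" unfolding ws_def using ws0 by auto
  ultimately show ?thesis by blast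
qed

lemma orth_mat_of_cols:
  fixes ws :: "real vec list"
  assumes ws: "length ws = n" "set ws \<subseteq> carrier_vec n"
    and ortho: "\<And>i j. i < n \<Longrightarrow> j < n \<Longrightarrow> ws ! i \<bullet> ws ! j = (if i = j then 1 else 0)"
  shows "orth_mat n (mat_of_cols n ws)"
proof -
  let ?W = "mat_of_cols n ws"
  have W: "?W \<in> carrier_mat n n" using ws(1) by (metis mat_of_cols_carrier(1))
  have col: "col ?W i = ws ! i" if "i < n" for i
    by (rule col_mat_of_cols) (use that ws in auto)
  have WtW: "?W\<^sup>T * ?W = 1\<^sub>m n" by (rule eq_matI) (use W col ortho in auto)
  then have "?W * ?W\<^sup>T = 1\<^sub>m n" using mat_mult_left_right_inverse[OF _ W WtW] W by simp
  with W WtW show ?thesis unfolding orth_mat_def by auto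
qed

lemma orth_mat_first_col:
  fixes v :: "real vec"
  assumes "v \<in> carrier_vec n" "v \<bullet> v = 1"
  shows "\<exists>W. orth_mat n W \<and> col W 0 = v"
proof -
  obtain ws where ws: "length ws = n" "set ws \<subseteq> carrier_vec n" "ws ! 0 = v"
    and ortho: "\<forall>i<n. \<forall>j<n. ws ! i \<bullet> ws ! j = (if i = j then 1 else 0)"
    using orthonormal_basis_extending[OF assms] by blast
  have "n \<noteq> 0"
  proof
    assume "n = 0"
    then have "v \<bullet> v = 0" using assms(1) by (simp add: scalar_prod_def)
    then show False using assms(2) by simp
  qed
  then have "col (mat_of_cols n ws) 0 = v" using ws col_mat_of_cols[of 0 ws n] nth_mem[of 0 ws] by auto
  then show ?thesis using orth_mat_of_cols[OF ws(1,2)] ortho by blast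
qed

lemma orth_congruence_eigenvector_block:
  assumes A: "A \<in> carrier_mat (Suc m) (Suc m)" "A\<^sup>T = A"
    and W: "orth_mat (Suc m) W" and ev: "A *\<^sub>v col W 0 = e \<cdot>\<^sub>v col W 0"
  shows "W\<^sup>T * A * W = four_block_mat (mat 1 1 (\<lambda>_. e)) (0\<^sub>m 1 m) (0\<^sub>m m 1)
                (mat m m (\<lambda>(i, j). (W\<^sup>T * A * W) $$ (Suc i, Suc j)))"
proof -
  define A' where "A' = W\<^sup>T * A * W"
  have Wc: "W \<in> carrier_mat (Suc m) (Suc m)" and WtW: "W\<^sup>T * W = 1\<^sub>m (Suc m)"
    using W unfolding orth_mat_def by auto
  have A'c: "A' \<in> carrier_mat (Suc m) (Suc m)" unfolding A'_def using Wc A by auto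
  have col0: "A' $$ (i, 0) = (if i = 0 then e else 0)" if i: "i < Suc m" for i
  proof -
    have "A' $$ (i, 0) = row (W\<^sup>T) i \<bullet> col (A * W) 0"
      unfolding A'_def using Wc A i
      by (simp add: assoc_mult_mat[of _ "Suc m" "Suc m" _ "Suc m" _ "Suc m"] index_mult_mat)
    also have "col (A * W) 0 = e \<cdot>\<^sub>v col W 0" using col_mult2[OF A(1) Wc] ev by simp
    also have "row (W\<^sup>T) i \<bullet> (e \<cdot>\<^sub>v col W 0) = e * (W\<^sup>T * W) $$ (i, 0)"
      using Wc i by simp
    finally show ?thesis unfolding WtW using i by simp
  qed
  have sym: "A'\<^sup>T = A'" unfolding A'_def by (rule transpose_congruence[OF A(1) Wc A(2)])
  have row0: "A' $$ (0, j) = (if j = 0 then e else 0)" if j: "j < Suc m" for j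
    using col0[OF j] A'c j by (metis sym carrier_matD index_transpose_mat(1) zero_less_Suc)
  have "A' = four_block_mat (mat 1 1 (\<lambda>_. e)) (0\<^sub>m 1 m) (0\<^sub>m m 1)
                (mat m m (\<lambda>(i, j). A' $$ (Suc i, Suc j)))" (is "_ = ?B")
  proof (rule eq_matI)
    fix i j assume "i < dim_row ?B" "j < dim_col ?B"
    then show "A' $$ (i, j) = ?B $$ (i, j)" using col0 row0 by (cases i; cases j) auto
  qed (use A'c in auto)
  then show ?thesis unfolding A'_def .
qed

lemma length_char_poly_linear_factors:
  fixes A :: "real mat"
  assumes "A \<in> carrier_mat n n" "char_poly A = (\<Prod>e\<leftarrow>es. [:- e, 1:])"
  shows "length es = n"
proof -
  have "degree (\<Prod>e\<leftarrow>es. [:- (e::real), 1:]) = length es"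
    using degree_linear_factors[of uminus es] by simp
  with degree_monic_char_poly[OF assms(1)] assms(2) show ?thesis by auto
qed

lemma unit_eigenvector_exists:
  fixes A :: "real mat"
  assumes A: "A \<in> carrier_mat n n" and e: "eigenvalue A e"
  shows "\<exists>v. v \<in> carrier_vec n \<and> v \<bullet> v = 1 \<and> A *\<^sub>v v = e \<cdot>\<^sub>v v"
proof -
  from e obtain v0 where "eigenvector A v0 e" unfolding eigenvalue_def by blast
  hence v0: "v0 \<in> carrier_vec n" "v0 \<noteq> 0\<^sub>v n" "A *\<^sub>v v0 = e \<cdot>\<^sub>v v0"
    unfolding eigenvector_def using carrier_matD(1)[OF A] by metis+
  have "v0 \<bullet>c v0 > 0" using conjugate_square_greater_0_vec[OF v0(1)] v0(2) by blast
  hence pos: "v0 \<bullet> v0 > 0" by simp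
  define v where "v = (1 / sqrt (v0 \<bullet> v0)) \<cdot>\<^sub>v v0"
  have "v \<in> carrier_vec n" unfolding v_def using v0 by simp
  moreover have "v \<bullet> v = 1" unfolding v_def using v0(1) pos
    by (simp add: smult_scalar_prod_distrib scalar_prod_smult_distrib)
  moreover have "A *\<^sub>v v = e \<cdot>\<^sub>v v" unfolding v_def using v0 A
    by (simp add: mult_mat_vec smult_smult_assoc mult.commute)
  ultimately show ?thesis by blast
qed

lemma orth_congruence_similar:
  assumes W: "orth_mat n W" and A: "A \<in> carrier_mat n n"
  shows "similar_mat (W\<^sup>T * A * W) A"
  unfolding similar_mat_def similar_mat_wit_def
  by (rule exI[of _ "W\<^sup>T"], rule exI[of _ W]) (use W A in \<open>auto simp: orth_mat_def Let_def\<close>)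

lemma orth_congruence_inverse:
  assumes W: "orth_mat n W" and A: "A \<in> carrier_mat n n"
  shows "A = W * (W\<^sup>T * A * W) * W\<^sup>T"
proof -
  have Wc: "W \<in> carrier_mat n n" and WWt: "W * W\<^sup>T = 1\<^sub>m n" using W unfolding orth_mat_def by auto
  have "A = (W * W\<^sup>T) * A * (W * W\<^sup>T)" using WWt A by simp
  also have "\<dots> = W * (W\<^sup>T * A * W) * W\<^sup>T" using A Wc by (simp add: assoc_mult_mat[of _ n n _ n _ n])
  finally show ?thesis .
qed

lemma transpose_lower_block:
  assumes "A \<in> carrier_mat (Suc m) (Suc m)" "A\<^sup>T = A"
  shows "(mat m m (\<lambda>(i, j). A $$ (Suc i, Suc j)))\<^sup>T = mat m m (\<lambda>(i, j). A $$ (Suc i, Suc j))"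
    (is "?B\<^sup>T = ?B")
proof (rule eq_matI)
  fix i j assume "i < dim_row ?B" "j < dim_col ?B"
  then have ij: "i < m" "j < m" by auto
  then have "A $$ (Suc j, Suc i) = A $$ (Suc i, Suc j)"
    using assms by (metis Suc_mono carrier_matD index_transpose_mat(1))
  then show "?B\<^sup>T $$ (i, j) = ?B $$ (i, j)" using ij by simp
qed auto

lemma char_poly_one_block:
  fixes A :: "real mat"
  assumes "A \<in> carrier_mat m m"
  shows "char_poly (four_block_mat (mat 1 1 (\<lambda>_. e)) (0\<^sub>m 1 m) (0\<^sub>m m 1) A) = [: -e, 1:] * char_poly A"
proof -
  have "char_poly (four_block_mat (mat 1 1 (\<lambda>_. e)) (0\<^sub>m 1 m) (0\<^sub>m m 1) A)
      = char_poly (mat 1 1 (\<lambda>_. e)) * char_poly A"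
    by (rule char_poly_four_block_zeros_col) (use assms in auto)
  also have "char_poly (mat 1 1 (\<lambda>_. e) :: real mat) = [: -e, 1:]"
    by (simp add: char_poly_defs det_def sign_def)
  finally show ?thesis .
qed

lemma one_block_diag_congruence:
  assumes P: "P \<in> carrier_mat (length es) (length es)"
  defines "B \<equiv> four_block_mat (1\<^sub>m 1) (0\<^sub>m 1 (length es)) (0\<^sub>m (length es) 1) P"
  shows "B * diag_of_list (e # es) * B\<^sup>T
    = four_block_mat (mat 1 1 (\<lambda>_. e)) (0\<^sub>m 1 (length es)) (0\<^sub>m (length es) 1) (P * diag_of_list es * P\<^sup>T)"
proof -
  have Bt: "B\<^sup>T = four_block_mat (1\<^sub>m 1) (0\<^sub>m 1 (length es)) (0\<^sub>m (length es) 1) P\<^sup>T"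
    unfolding B_def using P by (subst transpose_four_block_mat) auto
  have BD: "B * diag_of_list (e # es)
      = four_block_mat (mat 1 1 (\<lambda>_. e)) (0\<^sub>m 1 (length es)) (0\<^sub>m (length es) 1) (P * diag_of_list es)"
    unfolding B_def diag_of_list_Cons using P by (subst mult_four_block_mat) auto
  show ?thesis unfolding BD Bt using P by (subst mult_four_block_mat) auto
qed

text \<open>Spectral theorem: peel off a unit eigenvector and recurse on its orthogonal complement.\<close>

lemma sym_mat_orth_diagonalization_char_poly:
  fixes A :: "real mat"
  assumes "A \<in> carrier_mat n n" "A\<^sup>T = A" "char_poly A = (\<Prod>e\<leftarrow>es. [:- e, 1:])"
  shows "\<exists>U. orth_mat n U \<and> A = U * diag_of_list es * U\<^sup>T"
  using assms
proof (induction es arbitrary: n A)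
  case Nil
  have "n = 0" using length_char_poly_linear_factors[OF Nil(1,3)] by simp
  then have "orth_mat n (1\<^sub>m 0)" "A = 1\<^sub>m 0 * diag_of_list [] * (1\<^sub>m 0)\<^sup>T"
    using Nil(1) by (auto simp: orth_mat_def diag_of_list_def intro!: eq_matI)
  then show ?case by blast
next
  case (Cons e es n A)
  note A = Cons.prems(1) and A_sym = Cons.prems(2)
  define m where "m = length es"
  have n: "n = Suc m" using length_char_poly_linear_factors[OF A Cons.prems(3)] by (simp add: m_def)
  have "eigenvalue A e" unfolding eigenvalue_root_char_poly[OF A] Cons.prems(3) by simp
  then obtain v where v: "v \<in> carrier_vec n" "v \<bullet> v = 1" "A *\<^sub>v v = e \<cdot>\<^sub>v v"
    using unit_eigenvector_exists[OF A] by blast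
  then obtain W where W: "orth_mat n W" and W0: "col W 0 = v"
    using orth_mat_first_col by blast
  have Wc: "W \<in> carrier_mat n n" using W by (rule orth_mat_carrier)
  define A3 where "A3 = mat m m (\<lambda>(i, j). (W\<^sup>T * A * W) $$ (Suc i, Suc j))"
  have blk: "W\<^sup>T * A * W = four_block_mat (mat 1 1 (\<lambda>_. e)) (0\<^sub>m 1 m) (0\<^sub>m m 1) A3"
    unfolding A3_def
    by (rule orth_congruence_eigenvector_block) (use A A_sym W W0 v(3) n in auto)
  have A3c: "A3 \<in> carrier_mat m m" unfolding A3_def by simp
  have A3_sym: "A3\<^sup>T = A3"
    unfolding A3_def
    by (rule transpose_lower_block) (use A Wc n transpose_congruence[OF A Wc A_sym] in auto)
  have "[: -e, 1:] * char_poly A3 = [: -e, 1:] * (\<Prod>e\<leftarrow>es. [:- e, 1:])"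
    using char_poly_similar[OF orth_congruence_similar[OF W A]] Cons.prems(3)
    unfolding blk char_poly_one_block[OF A3c] by simp
  then have "char_poly A3 = (\<Prod>e\<leftarrow>es. [:- e, 1:])"
    by (metis mult_cancel_left pCons_eq_0_iff zero_neq_one)
  from Cons.IH[OF A3c A3_sym this] obtain P where P: "orth_mat m P"
    and A3_eq: "A3 = P * diag_of_list es * P\<^sup>T" by blast
  define B where "B = four_block_mat (1\<^sub>m 1) (0\<^sub>m 1 m) (0\<^sub>m m 1) P"
  have B: "orth_mat n B" unfolding B_def n by (rule orth_mat_one_block[OF P])
  have "W\<^sup>T * A * W = B * diag_of_list (e # es) * B\<^sup>T"
    unfolding blk A3_eq B_def m_def
    by (rule one_block_diag_congruence[symmetric]) (use orth_mat_carrier[OF P] m_def in simp)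
  then have "A = W * (B * diag_of_list (e # es) * B\<^sup>T) * W\<^sup>T"
    using orth_congruence_inverse[OF W A] by simp
  also have "\<dots> = (W * B) * diag_of_list (e # es) * (W * B)\<^sup>T"
  proof -
    have "diag_of_list (e # es) \<in> carrier_mat n n"
      unfolding n m_def using diag_of_list_carrier[of "e # es"] by simp
    then show ?thesis using Wc orth_mat_carrier[OF B] transpose_mult[OF Wc orth_mat_carrier[OF B]]
      by (simp add: assoc_mult_mat[of _ n n _ n _ n])
  qed
  finally show ?case using orth_mat_mult[OF W B] by blast
qed

lemma sym_real_mat_eigenvalue_real:
  fixes A :: "real mat"
  assumes A: "A \<in> carrier_mat n n" "A\<^sup>T = A"
    and ev: "eigenvalue (map_mat complex_of_real A) c"
  shows "Im c = 0"
proof -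
  txt \<open>\<open>v\<^sup>* A v\<close> is its own conjugate and equals \<open>c \<parallel>v\<parallel>\<^sup>2\<close>.\<close>
  let ?C = "map_mat complex_of_real A"
  from ev obtain v where "eigenvector ?C v c" unfolding eigenvalue_def by auto
  hence v: "v \<in> carrier_vec n" "v \<noteq> 0\<^sub>v n" "?C *\<^sub>v v = c \<cdot>\<^sub>v v"
    unfolding eigenvector_def using A by auto
  have sym: "A $$ (a, b) = A $$ (b, a)" if "a < n" "b < n" for a b
    using that A by (metis carrier_matD index_transpose_mat(1))
  define s where "s = (\<Sum>a<n. cnj (v $ a) * (?C *\<^sub>v v) $ a)"
  define N where "N = (\<Sum>a<n. cnj (v $ a) * v $ a)"
  have s_eig: "s = c * N" unfolding s_def N_def v(3) using v(1)
    by (auto simp: sum_distrib_left intro!: sum.cong)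
  have s_entries: "s = (\<Sum>a<n. \<Sum>b<n. cnj (v $ a) * complex_of_real (A $$ (a, b)) * v $ b)"
    unfolding s_def using v(1) A
    by (auto simp: sum_distrib_left scalar_prod_def mult.assoc intro!: sum.cong)
  have "cnj s = (\<Sum>a<n. \<Sum>b<n. v $ a * complex_of_real (A $$ (a, b)) * cnj (v $ b))"
    unfolding s_entries by (simp add: cnj_sum)
  also have "\<dots> = (\<Sum>b<n. \<Sum>a<n. v $ a * complex_of_real (A $$ (a, b)) * cnj (v $ b))"
    by (rule sum.swap)
  also have "\<dots> = s" unfolding s_entries
    by (auto simp: sym mult.commute mult.left_commute intro!: sum.cong)
  finally have s_real: "cnj s = s" .
  have N_norm: "N = complex_of_real (\<Sum>a<n. (cmod (v $ a))\<^sup>2)" unfolding N_def of_real_sum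
    by (rule sum.cong, simp, subst complex_norm_square, simp add: mult.commute)
  obtain a where a: "a < n" "v $ a \<noteq> 0" using v(1,2) by (metis eq_vecI carrier_vecD index_zero_vec)
  have "(\<Sum>a<n. (cmod (v $ a))\<^sup>2) \<ge> (cmod (v $ a))\<^sup>2"
    by (rule member_le_sum) (use a in auto)
  then have "N \<noteq> 0" unfolding N_norm using a
    by (metis of_real_eq_0_iff not_le zero_less_power2 norm_eq_zero)
  moreover have "cnj N = N" unfolding N_norm by (rule complex_cnj_complex_of_real)
  ultimately have "cnj c = c" using s_real s_eig by simp
  then show "Im c = 0" by (metis Reals_cnj_iff complex_is_Real_iff)
qed

lemma sym_char_poly_splits:
  fixes A :: "real mat"
  assumes A: "A \<in> carrier_mat n n" "A\<^sup>T = A"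
  shows "\<exists>es. char_poly A = (\<Prod>e\<leftarrow>es. [:- e, 1:])"
proof -
  let ?C = "map_mat complex_of_real A"
  have C: "?C \<in> carrier_mat n n" using A by simp
  from char_poly_factorized[OF C] obtain cs where cs: "char_poly ?C = (\<Prod>a\<leftarrow>cs. [:- a, 1:])"
    by blast
  have "Im c = 0" if c: "c \<in> set cs" for c
  proof -
    have "poly (char_poly ?C) c = 0" unfolding cs using c
      by (auto simp: poly_prod_list prod_list_zero_iff)
    then show ?thesis
      using sym_real_mat_eigenvalue_real[OF A] eigenvalue_root_char_poly[OF C] by simp
  qed
  then have cs_real: "cs = map (complex_of_real \<circ> Re) cs"
    by (induct cs) (auto simp: complex_eq_iff)
  interpret map_poly_inj_idom_hom complex_of_real ..
  have "map_poly complex_of_real (char_poly A) = char_poly ?C"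
    by (rule sym, rule of_real_hom.char_poly_hom[OF A(1)])
  also have "\<dots> = map_poly complex_of_real (\<Prod>e\<leftarrow>map Re cs. [:- e, 1:])"
    unfolding cs by (subst cs_real) (simp add: hom_prod_list o_def hom_distribs)
  finally have "char_poly A = (\<Prod>e\<leftarrow>map Re cs. [:- e, 1:])" by simp
  then show ?thesis by blast
qed

lemma linear_factors_mset_cong:
  assumes "mset xs = mset ys"
  shows "(\<Prod>e\<leftarrow>xs. [:- e, 1:]) = (\<Prod>e\<leftarrow>ys. [:- (e::real), 1:])"
proof -
  have "(\<Prod>e\<leftarrow>zs. f e) = prod_mset (image_mset f (mset zs))" for zs and f :: "real \<Rightarrow> real poly"
    by (induction zs) auto
  then show ?thesis using assms by metis
qed

lemma linear_factors_eq_imp_mset_eq: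
  "(\<Prod>e\<leftarrow>xs. [:- (e::real), 1:]) = (\<Prod>e\<leftarrow>ys. [:- e, 1:]) \<Longrightarrow> mset xs = mset ys"
proof (induction xs arbitrary: ys)
  case Nil
  then show ?case using degree_linear_factors[of uminus ys] by simp
next
  case (Cons x xs ys)
  have "poly (\<Prod>e\<leftarrow>ys. [:- e, 1:]) x = 0" unfolding Cons.prems[symmetric] by simp
  then have "x \<in> set ys" by (auto simp: poly_prod_list prod_list_zero_iff)
  then have ys: "mset ys = mset (x # remove1 x ys)" by simp
  have "(\<Prod>e\<leftarrow>ys. [:- e, 1:]) = (\<Prod>e\<leftarrow>x # remove1 x ys. [:- e, 1:])"
    by (rule linear_factors_mset_cong[OF ys])
  then have "[:- x, 1:] * (\<Prod>e\<leftarrow>xs. [:- e, 1:]) = [:- x, 1:] * (\<Prod>e\<leftarrow>remove1 x ys. [:- e, 1:])"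
    using Cons.prems by simp
  then have "(\<Prod>e\<leftarrow>xs. [:- e, 1:]) = (\<Prod>e\<leftarrow>remove1 x ys. [:- e, 1:])"
    by (metis mult_cancel_left pCons_eq_0_iff zero_neq_one)
  then show ?case using Cons.IH ys by simp
qed

lemma eigvals_eqI:
  fixes A :: "real mat"
  assumes "A \<in> carrier_mat n n" "sorted xs" "length xs = n"
    and "char_poly A = (\<Prod>a\<leftarrow>xs. [:- a, 1:])"
  shows "eigvals A = xs"
  unfolding eigvals_def
proof (rule the_equality)
  show "sorted xs \<and> length xs = dim_row A \<and> char_poly A = (\<Prod>a\<leftarrow>xs. [:- a, 1:])"
    using assms by simp
  fix ys assume ys: "sorted ys \<and> length ys = dim_row A \<and> char_poly A = (\<Prod>a\<leftarrow>ys. [:- a, 1:])"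
  then have "mset ys = mset xs"
    by (intro linear_factors_eq_imp_mset_eq) (simp add: assms(4)[symmetric])
  then have "sort xs = ys" using ys by (intro properties_for_sort) simp_all
  then show "ys = xs" using assms(2) by (simp add: sorted_sort_id)
qed

lemma eigvals_sym_mat:
  fixes A :: "real mat"
  assumes A: "A \<in> carrier_mat n n" "A\<^sup>T = A"
  shows "sorted (eigvals A)" "length (eigvals A) = n"
    and "char_poly A = (\<Prod>a\<leftarrow>eigvals A. [:- a, 1:])"
proof -
  obtain es where es: "char_poly A = (\<Prod>e\<leftarrow>es. [:- e, 1:])"
    using sym_char_poly_splits[OF A] by blast
  have cp: "char_poly A = (\<Prod>e\<leftarrow>sort es. [:- e, 1:])"
    unfolding es by (rule linear_factors_mset_cong) simp
  have len: "length (sort es) = n" using length_char_poly_linear_factors[OF A(1) es] by simp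
  have "eigvals A = sort es" by (rule eigvals_eqI[OF A(1) _ len cp]) simp
  then show "sorted (eigvals A)" "length (eigvals A) = n"
    and "char_poly A = (\<Prod>a\<leftarrow>eigvals A. [:- a, 1:])"
    using len cp by simp_all
qed

lemma sym_mat_orth_diagonalization:
  fixes A :: "real mat"
  assumes A: "A \<in> carrier_mat n n" "A\<^sup>T = A" and es: "mset es = mset (eigvals A)"
  shows "\<exists>U. orth_mat n U \<and> A = U * diag_of_list es * U\<^sup>T"
proof -
  have "char_poly A = (\<Prod>a\<leftarrow>es. [:- a, 1:])"
    using eigvals_sym_mat(3)[OF A] linear_factors_mset_cong[OF es] by simp
  then show ?thesis by (rule sym_mat_orth_diagonalization_char_poly[OF A])
qed

section \<open>Spectral formulas for \<open>U diag(x) U\<^sup>T\<close>\<close>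

lemma orth_mat_cols:
  assumes "orth_mat n U" "l < n" "m < n"
  shows "(\<Sum>a<n. U $$ (a, l) * U $$ (a, m)) = (if l = m then 1 else 0)"
proof -
  from assms have U: "U \<in> carrier_mat n n" and "U\<^sup>T * U = 1\<^sub>m n" unfolding orth_mat_def by auto
  then have "(U\<^sup>T * U) $$ (l, m) = (if l = m then 1 else 0)" using assms by simp
  moreover have "(U\<^sup>T * U) $$ (l, m) = (\<Sum>a<n. U $$ (a, l) * U $$ (a, m))"
    using U assms by (simp add: scalar_prod_def lessThan_atLeast0)
  ultimately show ?thesis by simp
qed

lemma orth_mat_rows:
  assumes "orth_mat n U" "a < n" "b < n"
  shows "(\<Sum>m<n. U $$ (a, m) * U $$ (b, m)) = (if a = b then 1 else 0)"
proof -
  from assms have U: "U \<in> carrier_mat n n" and "U * U\<^sup>T = 1\<^sub>m n" unfolding orth_mat_def by auto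
  then have "(U * U\<^sup>T) $$ (a, b) = (if a = b then 1 else 0)" using assms by simp
  moreover have "(U * U\<^sup>T) $$ (a, b) = (\<Sum>m<n. U $$ (a, m) * U $$ (b, m))"
    using U assms by (simp add: scalar_prod_def lessThan_atLeast0)
  ultimately show ?thesis by simp
qed

lemma orth_diag_carrier:
  "orth_mat n U \<Longrightarrow> length es = n \<Longrightarrow> U * diag_of_list es * U\<^sup>T \<in> carrier_mat n n"
  using orth_mat_carrier by fastforce

lemma orth_diag_entry:
  assumes U: "orth_mat n U" and es: "length es = n" and ab: "a < n" "b < n"
  shows "(U * diag_of_list es * U\<^sup>T) $$ (a, b) = (\<Sum>m<n. es ! m * U $$ (a, m) * U $$ (b, m))"
proof -
  have Uc: "U \<in> carrier_mat n n" using U by (rule orth_mat_carrier)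
  have D: "diag_of_list es \<in> carrier_mat n n" using es by auto
  have "(U * diag_of_list es) $$ (a, m) = U $$ (a, m) * es ! m" if m: "m < n" for m
  proof -
    have "(U * diag_of_list es) $$ (a, m) = (\<Sum>c<n. U $$ (a, c) * diag_of_list es $$ (c, m))"
      using Uc D ab m es by (simp add: scalar_prod_def lessThan_atLeast0)
    also have "\<dots> = (\<Sum>c<n. if c = m then U $$ (a, m) * es ! m else 0)"
      by (rule sum.cong) (use m es in \<open>auto simp: diag_of_list_def\<close>)
    finally show ?thesis using m by simp
  qed
  moreover have "(U * diag_of_list es * U\<^sup>T) $$ (a, b) = (\<Sum>m<n. (U * diag_of_list es) $$ (a, m) * U $$ (b, m))"
    using Uc D ab es by (simp add: scalar_prod_def lessThan_atLeast0 del: assoc_mult_mat)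
  ultimately show ?thesis by (simp add: mult_ac)
qed

lemma double_sum_weighted_outer_eq:
  fixes p e :: "nat \<Rightarrow> real" and U :: "nat \<Rightarrow> nat \<Rightarrow> real"
  shows "(\<Sum>a<n. \<Sum>b<n. p a * p b * (\<Sum>m<n. e m * U a m * U b m)) =
         (\<Sum>m<n. e m * (\<Sum>a<n. U a m * p a)\<^sup>2)"
proof -
  have "(\<Sum>a<n. \<Sum>b<n. p a * p b * (\<Sum>m<n. e m * U a m * U b m)) =
        (\<Sum>a<n. \<Sum>b<n. \<Sum>m<n. e m * (U a m * p a) * (U b m * p b))"
    by (simp add: sum_distrib_left mult_ac)
  also have "\<dots> = (\<Sum>a<n. \<Sum>m<n. \<Sum>b<n. e m * (U a m * p a) * (U b m * p b))"
    by (rule sum.cong[OF refl], rule sum.swap)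
  also have "\<dots> = (\<Sum>m<n. \<Sum>a<n. \<Sum>b<n. e m * (U a m * p a) * (U b m * p b))"
    by (rule sum.swap)
  also have "\<dots> = (\<Sum>m<n. e m * (\<Sum>a<n. U a m * p a)\<^sup>2)"
    by (simp add: power2_eq_square sum_distrib_left sum_distrib_right mult_ac)
  finally show ?thesis .
qed

lemma orth_diag_quadratic_form:
  assumes U: "orth_mat n U" and es: "length es = n" and v: "v \<in> carrier_vec n"
  shows "v \<bullet> ((U * diag_of_list es * U\<^sup>T) *\<^sub>v v) = (\<Sum>m<n. es ! m * (\<Sum>a<n. U $$ (a, m) * v $ a)\<^sup>2)"
proof -
  have "v \<bullet> ((U * diag_of_list es * U\<^sup>T) *\<^sub>v v)
      = (\<Sum>a<n. v $ a * (\<Sum>b<n. (U * diag_of_list es * U\<^sup>T) $$ (a, b) * v $ b))"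
    using v orth_diag_carrier[OF U es]
    by (auto simp: scalar_prod_def mult_mat_vec_def lessThan_atLeast0 simp del: assoc_mult_mat
        intro!: sum.cong)
  also have "\<dots> = (\<Sum>a<n. \<Sum>b<n. v $ a * v $ b * (\<Sum>m<n. es ! m * U $$ (a, m) * U $$ (b, m)))"
    by (auto simp: sum_distrib_left orth_diag_entry[OF U es] mult_ac intro!: sum.cong)
  also have "\<dots> = (\<Sum>m<n. es ! m * (\<Sum>a<n. U $$ (a, m) * v $ a)\<^sup>2)"
    by (rule double_sum_weighted_outer_eq)
  finally show ?thesis .
qed

lemma orth_mat_sum_squares:
  assumes U: "orth_mat n U"
  shows "(\<Sum>m<n. (\<Sum>a<n. U $$ (a, m) * p a)\<^sup>2) = (\<Sum>a<n. (p a)\<^sup>2)"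
proof -
  have "(\<Sum>m<n. (\<Sum>a<n. U $$ (a, m) * p a)\<^sup>2)
      = (\<Sum>a<n. \<Sum>b<n. p a * p b * (\<Sum>m<n. 1 * U $$ (a, m) * U $$ (b, m)))"
    using double_sum_weighted_outer_eq[of p "\<lambda>_. 1" "\<lambda>a m. U $$ (a, m)" n] by simp
  also have "\<dots> = (\<Sum>a<n. \<Sum>b<n. if a = b then p a * p b else 0)"
    by (rule sum.cong[OF refl], rule sum.cong[OF refl]) (simp add: orth_mat_rows[OF U])
  finally show ?thesis by (simp add: power2_eq_square)
qed

lemma orth_diag_quadratic_form_col:
  assumes U: "orth_mat n U" and es: "length es = n" and m: "m < n"
  shows "col U m \<bullet> ((U * diag_of_list es * U\<^sup>T) *\<^sub>v col U m) = es ! m"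
proof -
  have Uc: "U \<in> carrier_mat n n" using U by (rule orth_mat_carrier)
  have "col U m \<bullet> ((U * diag_of_list es * U\<^sup>T) *\<^sub>v col U m)
      = (\<Sum>i<n. es ! i * (\<Sum>a<n. U $$ (a, i) * U $$ (a, m))\<^sup>2)"
    using orth_diag_quadratic_form[OF U es] Uc m by simp
  also have "\<dots> = (\<Sum>i<n. if i = m then es ! m else 0)"
    by (rule sum.cong) (use orth_mat_cols[OF U _ m] in auto)
  finally show ?thesis using m by simp
qed

lemma orth_mat_col_nonzero:
  assumes U: "orth_mat n U" and m: "m < n"
  shows "col U m \<noteq> 0\<^sub>v n"
proof
  have Uc: "U \<in> carrier_mat n n" using U by (rule orth_mat_carrier)
  assume "col U m = 0\<^sub>v n"
  then have "U $$ (a, m) = 0" if "a < n" for a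
    using that Uc m by (metis carrier_matD(1,2) col_def index_vec index_zero_vec(1))
  then show False using orth_mat_cols[OF U m m] by simp
qed

lemma orth_diag_psd_nonneg:
  assumes X: "psd_mat n (U * diag_of_list es * U\<^sup>T)" and U: "orth_mat n U"
    and es: "length es = n" and m: "m < n"
  shows "es ! m \<ge> 0"
  using X orth_diag_quadratic_form_col[OF U es m] orth_mat_carrier[OF U] m
  unfolding psd_mat_def by (metis carrier_matD(2) col_carrier_vec)

lemma orth_diag_pd_iff:
  assumes U: "orth_mat n U" and es: "length es = n"
  shows "pd_mat n (U * diag_of_list es * U\<^sup>T) \<longleftrightarrow> (\<forall>m<n. es ! m > 0)"
proof
  assume "pd_mat n (U * diag_of_list es * U\<^sup>T)"
  then show "\<forall>m<n. es ! m > 0"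
    using orth_diag_quadratic_form_col[OF U es] orth_mat_col_nonzero[OF U] orth_mat_carrier[OF U]
    unfolding pd_mat_def by (metis carrier_matD(2) col_carrier_vec)
next
  assume pos: "\<forall>m<n. es ! m > 0"
  show "pd_mat n (U * diag_of_list es * U\<^sup>T)"
    unfolding pd_mat_def sym_mat_def
  proof (intro conjI ballI impI)
    show "U * diag_of_list es * U\<^sup>T \<in> carrier_mat n n" by (rule orth_diag_carrier[OF U es])
    show "(U * diag_of_list es * U\<^sup>T)\<^sup>T = U * diag_of_list es * U\<^sup>T"
      using transpose_congruence[of "diag_of_list es" n "U\<^sup>T" n] orth_mat_carrier[OF U] es
      by (metis carrier_matD(1,2) diag_of_list_carrier transpose_carrier_mat transpose_diag_of_list
          transpose_transpose)
    fix v :: "real vec" assume v: "v \<in> carrier_vec n" and v0: "v \<noteq> 0\<^sub>v n"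
    define c where "c m = (\<Sum>a<n. U $$ (a, m) * v $ a)" for m
    obtain a where a: "a < n" "v $ a \<noteq> 0" using v v0 by (metis eq_vecI carrier_vecD index_zero_vec)
    have "(\<Sum>a<n. (v $ a)\<^sup>2) \<ge> (v $ a)\<^sup>2" by (rule member_le_sum) (use a in auto)
    then have "(\<Sum>m<n. (c m)\<^sup>2) > 0"
      unfolding c_def orth_mat_sum_squares[OF U] using a by (smt (verit) zero_less_power2)
    then obtain m where m: "m < n" "c m \<noteq> 0"
      by (metis (no_types, lifting) lessThan_iff power_zero_numeral sum.neutral less_irrefl)
    have "0 < es ! m * (c m)\<^sup>2" using pos m by simp
    also have "\<dots> \<le> (\<Sum>i<n. es ! i * (c i)\<^sup>2)"
      by (rule member_le_sum) (use pos m in \<open>auto intro: less_imp_le\<close>)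
    also have "\<dots> = v \<bullet> ((U * diag_of_list es * U\<^sup>T) *\<^sub>v v)"
      unfolding c_def by (rule orth_diag_quadratic_form[OF U es v, symmetric])
    finally show "v \<bullet> ((U * diag_of_list es * U\<^sup>T) *\<^sub>v v) > 0" .
  qed
qed

lemma eigvals_orth_diag:
  assumes U: "orth_mat n U" and w: "length w = n" and s: "sorted w"
  shows "eigvals (U * diag_of_list w * U\<^sup>T) = w"
proof -
  have Uc: "U \<in> carrier_mat n n" and o: "U\<^sup>T * U = 1\<^sub>m n" "U * U\<^sup>T = 1\<^sub>m n"
    using U unfolding orth_mat_def by auto
  have D: "diag_of_list w \<in> carrier_mat n n" using w by auto
  have sim: "similar_mat (U * diag_of_list w * U\<^sup>T) (diag_of_list w)"
    unfolding similar_mat_def similar_mat_wit_def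
    by (rule exI[of _ U], rule exI[of _ "U\<^sup>T"]) (use Uc D o in \<open>auto simp: Let_def\<close>)
  have "upper_triangular (diag_of_list w)" unfolding upper_triangular_def diag_of_list_def by auto
  moreover have "diag_mat (diag_of_list w) = w" unfolding diag_mat_def diag_of_list_def
    by (rule nth_equalityI) auto
  ultimately have "char_poly (U * diag_of_list w * U\<^sup>T) = (\<Prod>a\<leftarrow>w. [:- a, 1:])"
    using char_poly_similar[OF sim] char_poly_upper_triangular[OF D] by simp
  then show ?thesis by (rule eigvals_eqI[OF orth_diag_carrier[OF U w] s w])
qed

lemma rank_orth_diag_le:
  assumes U: "orth_mat n U" and x: "length x = n" and zero: "\<And>m. r \<le> m \<Longrightarrow> m < n \<Longrightarrow> x ! m = 0"
  shows "vec_space.rank n (U * diag_of_list x * U\<^sup>T) \<le> r"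
proof (cases "n \<le> r")
  case True
  then show ?thesis using vec_space.rank_le_nc[OF orth_diag_carrier[OF U x]] by simp
next
  case False
  define Xp where "Xp t = mat n n (\<lambda>(a, b). \<Sum>m<t. x ! m * U $$ (a, m) * U $$ (b, m))" for t
  have rank_Xp: "vec_space.rank n (Xp t) \<le> t" for t
  proof (induction t)
    case 0
    have "Xp 0 = 0\<^sub>m n n" unfolding Xp_def by (rule eq_matI) auto
    then show ?case using vec_space.rank_0I[of n n] by simp
  next
    case (Suc t)
    define R where "R = mat n n (\<lambda>(a, b). (x ! t * U $$ (a, t)) * U $$ (b, t))"
    have "Xp (Suc t) = Xp t + R" unfolding Xp_def R_def by (rule eq_matI) auto
    moreover have "vec_space.rank n R \<le> 1"
      by (rule vec_space.rank_le_1_product_entries[of R n n "\<lambda>a. x ! t * U $$ (a, t)" "\<lambda>b. U $$ (b, t)"])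
        (auto simp: R_def)
    moreover have "vec_space.rank n (Xp t + R) \<le> vec_space.rank n (Xp t) + vec_space.rank n R"
      by (rule vec_space.rank_subadditive) (auto simp: Xp_def R_def)
    ultimately show ?case using Suc by simp
  qed
  have "U * diag_of_list x * U\<^sup>T = Xp r"
  proof (rule eq_matI)
    fix a b assume "a < dim_row (Xp r)" "b < dim_col (Xp r)"
    then have ab: "a < n" "b < n" unfolding Xp_def by auto
    have "(\<Sum>m<n. x ! m * U $$ (a, m) * U $$ (b, m)) = (\<Sum>m<r. x ! m * U $$ (a, m) * U $$ (b, m))
       + (\<Sum>m\<in>{r..<n}. x ! m * U $$ (a, m) * U $$ (b, m))"
      using False by (simp add: lessThan_atLeast0 sum.atLeastLessThan_concat)
    then show "(U * diag_of_list x * U\<^sup>T) $$ (a, b) = Xp r $$ (a, b)"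
      unfolding orth_diag_entry[OF U x ab] Xp_def using ab zero by simp
  qed (use orth_diag_carrier[OF U x] in \<open>auto simp: Xp_def\<close>)
  then show ?thesis using rank_Xp[of r] by simp
qed

lemma mat_trace_mult:
  assumes "A \<in> carrier_mat n n" "B \<in> carrier_mat n n"
  shows "mat_trace (A * B) = (\<Sum>a<n. \<Sum>b<n. A $$ (a, b) * B $$ (b, a))"
  unfolding mat_trace_def using assms by (simp add: scalar_prod_def lessThan_atLeast0)

lemma trace_orth_diag_mult:
  assumes U: "orth_mat n U" and V: "orth_mat n V" and x: "length x = n" and mu: "length mu = n"
  shows "mat_trace ((V * diag_of_list mu * V\<^sup>T) * (U * diag_of_list x * U\<^sup>T)) =
    (\<Sum>l<n. \<Sum>m<n. mu ! l * x ! m * (\<Sum>a<n. V $$ (a, l) * U $$ (a, m))\<^sup>2)"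
proof -
  let ?P = "\<lambda>a l m b. mu ! l * x ! m * (V $$ (a, l) * U $$ (a, m)) * (V $$ (b, l) * U $$ (b, m))"
  have "mat_trace ((V * diag_of_list mu * V\<^sup>T) * (U * diag_of_list x * U\<^sup>T)) =
    (\<Sum>a<n. \<Sum>b<n. (\<Sum>l<n. mu ! l * V $$ (a, l) * V $$ (b, l)) * (\<Sum>m<n. x ! m * U $$ (b, m) * U $$ (a, m)))"
    by (simp add: mat_trace_mult[OF orth_diag_carrier[OF V mu] orth_diag_carrier[OF U x]]
        orth_diag_entry[OF U x] orth_diag_entry[OF V mu])
  also have "\<dots> = (\<Sum>a<n. \<Sum>b<n. \<Sum>m<n. \<Sum>l<n. ?P a l m b)"
    by (simp add: sum_distrib_left sum_distrib_right mult_ac)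
  also have "\<dots> = (\<Sum>a<n. \<Sum>b<n. \<Sum>l<n. \<Sum>m<n. ?P a l m b)"
    by (rule sum.cong[OF refl], rule sum.cong[OF refl], rule sum.swap)
  also have "\<dots> = (\<Sum>a<n. \<Sum>l<n. \<Sum>b<n. \<Sum>m<n. ?P a l m b)"
    by (rule sum.cong[OF refl], rule sum.swap)
  also have "\<dots> = (\<Sum>l<n. \<Sum>a<n. \<Sum>b<n. \<Sum>m<n. ?P a l m b)"
    by (rule sum.swap)
  also have "\<dots> = (\<Sum>l<n. \<Sum>a<n. \<Sum>m<n. \<Sum>b<n. ?P a l m b)"
    by (rule sum.cong[OF refl], rule sum.cong[OF refl], rule sum.swap)
  also have "\<dots> = (\<Sum>l<n. \<Sum>m<n. \<Sum>a<n. \<Sum>b<n. ?P a l m b)"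
    by (rule sum.cong[OF refl], rule sum.swap)
  also have "\<dots> = (\<Sum>l<n. \<Sum>m<n. mu ! l * x ! m * (\<Sum>a<n. V $$ (a, l) * U $$ (a, m))\<^sup>2)"
    by (simp add: power2_eq_square sum_distrib_left sum_distrib_right mult_ac)
  finally show ?thesis .
qed

lemma orth_overlap_doubly_stochastic:
  assumes U: "orth_mat n U" and V: "orth_mat n V"
  shows "l < n \<Longrightarrow> (\<Sum>m<n. (\<Sum>a<n. V $$ (a, l) * U $$ (a, m))\<^sup>2) = 1"
    and "m < n \<Longrightarrow> (\<Sum>l<n. (\<Sum>a<n. V $$ (a, l) * U $$ (a, m))\<^sup>2) = 1"
proof -
  assume l: "l < n"
  have "(\<Sum>m<n. (\<Sum>a<n. V $$ (a, l) * U $$ (a, m))\<^sup>2) = (\<Sum>a<n. (V $$ (a, l))\<^sup>2)"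
    using orth_mat_sum_squares[OF U, of "\<lambda>a. V $$ (a, l)"] by (simp add: mult.commute)
  then show "(\<Sum>m<n. (\<Sum>a<n. V $$ (a, l) * U $$ (a, m))\<^sup>2) = 1"
    using orth_mat_cols[OF V l l] by (simp add: power2_eq_square)
next
  assume m: "m < n"
  have "(\<Sum>l<n. (\<Sum>a<n. V $$ (a, l) * U $$ (a, m))\<^sup>2) = (\<Sum>a<n. (U $$ (a, m))\<^sup>2)"
    by (rule orth_mat_sum_squares[OF V])
  then show "(\<Sum>l<n. (\<Sum>a<n. V $$ (a, l) * U $$ (a, m))\<^sup>2) = 1"
    using orth_mat_cols[OF U m m] by (simp add: power2_eq_square)
qed

section \<open>Rearrangement inequalities\<close>

lemma sum_prefix_le_weighted_sum:
  fixes mu w :: "nat \<Rightarrow> real"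
  assumes mono: "\<And>i i'. k \<le> i \<Longrightarrow> i \<le> i' \<Longrightarrow> i' < n \<Longrightarrow> mu i \<le> mu i'"
    and w: "\<And>i. k \<le> i \<Longrightarrow> i < n \<Longrightarrow> 0 \<le> w i \<and> w i \<le> 1"
    and sum_w: "(\<Sum>i\<in>{k..<n}. w i) = real c" and c: "1 \<le> c" "k + c \<le> n"
  shows "(\<Sum>i\<in>{k..<k+c}. mu i) \<le> (\<Sum>i\<in>{k..<n}. mu i * w i)"
proof -
  define th where "th = mu (k + c - 1)"
  have sub: "{k..<k+c} \<subseteq> {k..<n}" using c by auto
  have "(\<Sum>i\<in>{k..<k+c}. mu i) = (\<Sum>i\<in>{k..<n}. if i < k + c then mu i else 0)"
    by (rule sum.mono_neutral_cong_left) (use sub in auto)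
  then have "(\<Sum>i\<in>{k..<n}. mu i * w i) - (\<Sum>i\<in>{k..<k+c}. mu i)
      = (\<Sum>i\<in>{k..<n}. mu i * w i - (if i < k + c then mu i else 0))"
    by (simp add: sum_subtractf)
  also have "\<dots> \<ge> (\<Sum>i\<in>{k..<n}. th * w i - (if i < k + c then th else 0))"
  proof (rule sum_mono)
    fix i assume i: "i \<in> {k..<n}"
    show "th * w i - (if i < k + c then th else 0) \<le> mu i * w i - (if i < k + c then mu i else 0)"
    proof (cases "i < k + c")
      case True
      then have "mu i \<le> th" "w i \<le> 1" unfolding th_def using i c w by (auto intro: mono)
      then have "(mu i - th) * (w i - 1) \<ge> 0" by (intro mult_nonpos_nonpos) auto
      then show ?thesis using True by (simp add: algebra_simps)
    next
      case False
      then have "th \<le> mu i" "w i \<ge> 0" unfolding th_def using i c w by (auto intro: mono)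
      then have "(mu i - th) * w i \<ge> 0" by simp
      then show ?thesis using False by (simp add: algebra_simps)
    qed
  qed
  also have "(\<Sum>i\<in>{k..<n}. th * w i - (if i < k + c then th else 0))
      = th * (\<Sum>i\<in>{k..<n}. w i) - (\<Sum>i\<in>{k..<n}. if i < k + c then th else 0)"
    by (simp add: sum_subtractf sum_distrib_left)
  also have "(\<Sum>i\<in>{k..<n}. if i < k + c then th else 0) = (\<Sum>i\<in>{k..<k+c}. th)"
    by (rule sum.mono_neutral_cong_right) (use sub in auto)
  finally show ?thesis unfolding sum_w by simp
qed

lemma sum_triangle_swap:
  "(\<Sum>m<n. \<Sum>t\<in>{m..<n}. g m t) = (\<Sum>t<n. \<Sum>m\<in>{0..<Suc t}. g m t)"
proof -
  have "(\<Sum>m<n. \<Sum>t\<in>{m..<n}. g m t) = (\<Sum>m<n. \<Sum>t\<in>{t\<in>{..<n}. m \<le> t}. g m t)"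
    by (intro sum.cong) auto
  also have "\<dots> = (\<Sum>t<n. \<Sum>m\<in>{m\<in>{..<n}. m \<le> t}. g m t)"
    by (rule sum.swap_restrict) auto
  also have "\<dots> = (\<Sum>t<n. \<Sum>m\<in>{0..<Suc t}. g m t)"
    by (intro sum.cong) auto
  finally show ?thesis .
qed

lemma sum_prefix_le_doubly_stochastic:
  fixes mu :: "nat \<Rightarrow> real" and M :: "nat \<Rightarrow> nat \<Rightarrow> real"
  assumes mono: "\<And>i i'. i \<le> i' \<Longrightarrow> i' < n \<Longrightarrow> mu i \<le> mu i'"
    and M_nonneg: "\<And>l m. l < n \<Longrightarrow> m < n \<Longrightarrow> 0 \<le> M l m"
    and rows: "\<And>l. l < n \<Longrightarrow> (\<Sum>m<n. M l m) = 1"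
    and cols: "\<And>m. m < n \<Longrightarrow> (\<Sum>l<n. M l m) = 1"
    and t: "t < n"
  shows "(\<Sum>l\<in>{0..<Suc t}. mu l) \<le> (\<Sum>l<n. mu l * (\<Sum>m\<in>{0..<Suc t}. M l m))"
proof -
  let ?w = "\<lambda>l. \<Sum>m\<in>{0..<Suc t}. M l m"
  have "0 \<le> ?w l \<and> ?w l \<le> 1" if "l < n" for l
  proof
    show "0 \<le> ?w l" by (rule sum_nonneg) (use M_nonneg that t in auto)
    have "?w l \<le> (\<Sum>m<n. M l m)"
      using M_nonneg that t by (intro sum_mono2) auto
    then show "?w l \<le> 1" using rows that by simp
  qed
  moreover have "(\<Sum>l\<in>{0..<n}. ?w l) = real (Suc t)"
  proof -
    have "(\<Sum>l\<in>{0..<n}. ?w l) = (\<Sum>m\<in>{0..<Suc t}. \<Sum>l<n. M l m)"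
      unfolding atLeast0LessThan by (rule sum.swap)
    also have "\<dots> = (\<Sum>m\<in>{0..<Suc t}. 1)" using cols t by (intro sum.cong) auto
    finally show ?thesis by simp
  qed
  ultimately have "(\<Sum>l\<in>{0..<0 + Suc t}. mu l) \<le> (\<Sum>l\<in>{0..<n}. mu l * ?w l)"
    by (intro sum_prefix_le_weighted_sum) (use mono t in auto)
  then show ?thesis by (simp add: atLeast0LessThan)
qed

text \<open>Abel summation writes the decreasing \<open>x\<close> as a nonnegative combination of indicators
  of initial segments, for which the inequality is the previous lemma.\<close>

lemma sum_mult_le_doubly_stochastic:
  fixes mu x :: "nat \<Rightarrow> real" and M :: "nat \<Rightarrow> nat \<Rightarrow> real"
  assumes mono: "\<And>i i'. i \<le> i' \<Longrightarrow> i' < n \<Longrightarrow> mu i \<le> mu i'"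
    and anti: "\<And>i i'. i \<le> i' \<Longrightarrow> i' < n \<Longrightarrow> x i' \<le> x i"
    and x_nonneg: "\<And>i. i < n \<Longrightarrow> 0 \<le> x i"
    and M_nonneg: "\<And>l m. l < n \<Longrightarrow> m < n \<Longrightarrow> 0 \<le> M l m"
    and rows: "\<And>l. l < n \<Longrightarrow> (\<Sum>m<n. M l m) = 1"
    and cols: "\<And>m. m < n \<Longrightarrow> (\<Sum>l<n. M l m) = 1"
  shows "(\<Sum>l<n. mu l * x l) \<le> (\<Sum>l<n. \<Sum>m<n. mu l * x m * M l m)"
proof -
  define dl where "dl t = x t - (if Suc t < n then x (Suc t) else 0)" for t
  have dl_nonneg: "0 \<le> dl t" if "t < n" for t unfolding dl_def using anti x_nonneg that by auto
  have x_abel: "x m = (\<Sum>t\<in>{m..<n}. dl t)" if m: "m < n" for m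
  proof -
    define xe where "xe t = (if t < n then x t else 0)" for t
    have "(\<Sum>t\<in>{m..<n}. dl t) = - (\<Sum>t\<in>{m..<n}. xe (Suc t) - xe t)"
      unfolding dl_def xe_def by (simp add: sum_negf[symmetric])
    also have "\<dots> = xe m - xe n" using sum_Suc_diff'[of m n xe] m by simp
    finally show ?thesis unfolding xe_def using m by simp
  qed
  have "(\<Sum>l<n. \<Sum>m<n. mu l * x m * M l m) = (\<Sum>l<n. \<Sum>m<n. \<Sum>t\<in>{m..<n}. mu l * M l m * dl t)"
    by (auto simp: x_abel sum_distrib_left mult_ac intro!: sum.cong)
  also have "\<dots> = (\<Sum>l<n. \<Sum>t<n. \<Sum>m\<in>{0..<Suc t}. mu l * M l m * dl t)"
    by (rule sum.cong[OF refl], rule sum_triangle_swap)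
  also have "\<dots> = (\<Sum>t<n. \<Sum>l<n. \<Sum>m\<in>{0..<Suc t}. mu l * M l m * dl t)"
    by (rule sum.swap)
  also have "\<dots> = (\<Sum>t<n. dl t * (\<Sum>l<n. mu l * (\<Sum>m\<in>{0..<Suc t}. M l m)))"
    by (simp only: sum_distrib_left mult_ac)
  also have "\<dots> \<ge> (\<Sum>t<n. dl t * (\<Sum>l\<in>{0..<Suc t}. mu l))"
    by (intro sum_mono mult_left_mono sum_prefix_le_doubly_stochastic[OF mono M_nonneg rows cols])
      (auto intro: dl_nonneg)
  also have "(\<Sum>t<n. dl t * (\<Sum>l\<in>{0..<Suc t}. mu l)) = (\<Sum>l<n. \<Sum>t\<in>{l..<n}. mu l * dl t)"
    by (simp only: sum_triangle_swap sum_distrib_left mult_ac)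
  also have "\<dots> = (\<Sum>l<n. mu l * x l)"
    by (auto simp: x_abel sum_distrib_left intro!: sum.cong)
  finally show ?thesis .
qed

lemma sum_lessThan_split:
  "k \<le> (d::nat) \<Longrightarrow> (\<Sum>i<d. f i) = (\<Sum>i<k. f i) + (\<Sum>i\<in>{k..<d}. (f i :: real))"
  by (simp add: lessThan_atLeast0 sum.atLeastLessThan_concat)

text \<open>Each term is bounded by \<open>1 + ln t \<le> t\<close>; on the tail, where the weights \<open>x\<^sub>i / a\<close> sum
  to \<open>j - k\<close> and lie in \<open>[0, 1]\<close>, the smallest \<open>\<mu>\<^sub>i\<close> are selected first.\<close>

lemma weighted_sum_ge_log_bound:
  fixes mu x :: "nat \<Rightarrow> real"
  assumes mono: "\<And>i i'. i \<le> i' \<Longrightarrow> i' < d \<Longrightarrow> mu i \<le> mu i'"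
    and mu_pos: "\<And>i. i < d \<Longrightarrow> 0 < mu i"
    and anti: "\<And>i i'. i \<le> i' \<Longrightarrow> i' < d \<Longrightarrow> x i' \<le> x i"
    and x_nonneg: "\<And>i. i < d \<Longrightarrow> 0 \<le> x i"
    and kj: "k < j" "j \<le> d"
    and x_pos: "\<And>i. i < k \<Longrightarrow> 0 < x i"
    and a_def: "a = (\<Sum>i\<in>{k..<d}. x i) / real (j - k)" and a_pos: "0 < a"
    and x_le: "x k \<le> a"
  shows "real j + (\<Sum>i<j. ln (mu i)) + ((\<Sum>i<k. ln (x i)) + real (j - k) * ln a)
         \<le> (\<Sum>i<d. mu i * x i)"
proof -
  have ln_le: "1 + ln t \<le> t" if "0 < t" for t :: real using ln_le_minus_one[OF that] by simp
  have head: "(\<Sum>i<k. 1 + ln (mu i) + ln (x i)) \<le> (\<Sum>i<k. mu i * x i)"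
  proof (rule sum_mono)
    fix i assume "i \<in> {..<k}"
    then have "0 < mu i" "0 < x i" using mu_pos x_pos kj by auto
    then show "1 + ln (mu i) + ln (x i) \<le> mu i * x i" using ln_le[of "mu i * x i"] by (simp add: ln_mult)
  qed
  have w: "0 \<le> x i / a \<and> x i / a \<le> 1" if "k \<le> i" "i < d" for i
    using anti[OF that] x_nonneg[OF that(2)] x_le a_pos by auto
  have "(\<Sum>i\<in>{k..<d}. x i / a) = (\<Sum>i\<in>{k..<d}. x i) / a" by (simp add: sum_divide_distrib)
  also have "(\<Sum>i\<in>{k..<d}. x i) = a * real (j - k)" unfolding a_def using kj by simp
  finally have sum_w: "(\<Sum>i\<in>{k..<d}. x i / a) = real (j - k)" using a_pos by simp
  have prefix: "(\<Sum>i\<in>{k..<k + (j - k)}. mu i) \<le> (\<Sum>i\<in>{k..<d}. mu i * (x i / a))"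
    by (rule sum_prefix_le_weighted_sum[OF _ w sum_w]) (use mono kj in auto)
  have "(\<Sum>i\<in>{k..<j}. 1 + ln a + ln (mu i)) \<le> (\<Sum>i\<in>{k..<j}. a * mu i)"
  proof (rule sum_mono)
    fix i assume "i \<in> {k..<j}"
    then have "0 < mu i" using mu_pos kj by auto
    then show "1 + ln a + ln (mu i) \<le> a * mu i" using ln_le[of "a * mu i"] a_pos by (simp add: ln_mult)
  qed
  also have "\<dots> = a * (\<Sum>i\<in>{k..<k + (j - k)}. mu i)" using kj by (simp add: sum_distrib_left)
  also have "\<dots> \<le> a * (\<Sum>i\<in>{k..<d}. mu i * (x i / a))" using prefix a_pos by simp
  also have "\<dots> = (\<Sum>i\<in>{k..<d}. mu i * x i)" using a_pos by (simp add: sum_distrib_left)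
  finally have tail: "(\<Sum>i\<in>{k..<j}. 1 + ln a + ln (mu i)) \<le> (\<Sum>i\<in>{k..<d}. mu i * x i)" .
  have "(\<Sum>i\<in>{k..<j}. 1 + ln a + ln (mu i)) = real (j - k) * (1 + ln a) + (\<Sum>i\<in>{k..<j}. ln (mu i))"
    using kj by (simp add: sum.distrib)
  moreover have "(\<Sum>i<k. 1 + ln (mu i) + ln (x i)) = real k + (\<Sum>i<k. ln (mu i)) + (\<Sum>i<k. ln (x i))"
    by (simp add: sum.distrib)
  moreover have "(\<Sum>i<d. mu i * x i) = (\<Sum>i<k. mu i * x i) + (\<Sum>i\<in>{k..<d}. mu i * x i)"
    by (rule sum_lessThan_split) (use kj in simp)
  moreover have "(\<Sum>i<j. ln (mu i)) = (\<Sum>i<k. ln (mu i)) + (\<Sum>i\<in>{k..<j}. ln (mu i))"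
    by (rule sum_lessThan_split) (use kj in simp)
  moreover have "real j = real k + real (j - k)" and "real (j - k) * (1 + ln a) = real (j - k) + real (j - k) * ln a"
    using kj by (simp_all add: algebra_simps)
  ultimately show ?thesis using head tail by linarith
qed

section \<open>The index \<open>k\<close> in the definition of \<open>\<gamma>\<^sub>j\<close>\<close>

definition tail_mean :: "nat \<Rightarrow> real list \<Rightarrow> nat \<Rightarrow> real" where
  "tail_mean j xs k = (\<Sum>i\<in>{k..<length xs}. xs ! i) / real (j - k)"

lemma ord_coord_rev_sorted:
  "sorted (rev xs) \<Longrightarrow> 0 < i \<Longrightarrow> ord_coord (rev xs) i = xs ! (i - 1)"
  unfolding ord_coord_def by (simp add: sorted_sort_id)

lemma sum_ord_coord_rev_sorted:
  assumes "sorted (rev xs)"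
  shows "(\<Sum>i\<in>{k<..length (rev xs)}. ord_coord (rev xs) i) = (\<Sum>i\<in>{k..<length xs}. xs ! i)"
proof -
  have "{k<..length (rev xs)} = {Suc k..<Suc (length xs)}" by auto
  then have "(\<Sum>i\<in>{k<..length (rev xs)}. ord_coord (rev xs) i)
      = (\<Sum>i\<in>{k..<length xs}. ord_coord (rev xs) (Suc i))"
    by (simp only: sum.shift_bounds_Suc_ivl)
  then show ?thesis using assms by (simp add: ord_coord_rev_sorted)
qed

lemma gamma_k_rev_sorted:
  assumes "sorted (rev xs)"
  shows "gamma_k j (rev xs) =
    (THE k. k \<le> j - 1 \<and> (k = 0 \<or> tail_mean j xs k < xs ! (k - 1)) \<and> xs ! k \<le> tail_mean j xs k)"
  unfolding gamma_k_def sum_ord_coord_rev_sorted[OF assms] tail_mean_def[symmetric]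
proof (intro arg_cong[where f = The] ext)
  fix k
  show "(k \<le> j - 1 \<and> (k = 0 \<or> tail_mean j xs k < ord_coord (rev xs) k)
         \<and> ord_coord (rev xs) (k + 1) \<le> tail_mean j xs k)
      = (k \<le> j - 1 \<and> (k = 0 \<or> tail_mean j xs k < xs ! (k - 1)) \<and> xs ! k \<le> tail_mean j xs k)"
    by (cases k) (simp_all add: ord_coord_rev_sorted[OF assms])
qed

lemma tail_mean_Suc_iff:
  assumes "Suc m < j" "j \<le> length xs"
  shows "xs ! m \<le> tail_mean j xs m \<longleftrightarrow> xs ! m \<le> tail_mean j xs (Suc m)"
proof -
  define S where "S = (\<Sum>i\<in>{Suc m..<length xs}. xs ! i)"
  have "(\<Sum>i\<in>{m..<length xs}. xs ! i) = xs ! m + S"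
    unfolding S_def using assms by (simp add: sum.atLeast_Suc_lessThan)
  moreover have "real (j - m) = real (j - Suc m) + 1" using assms by simp
  moreover have "0 < real (j - Suc m)" using assms by simp
  ultimately show ?thesis
    unfolding tail_mean_def S_def[symmetric] by (simp add: pos_le_divide_eq algebra_simps)
qed

lemma gamma_cut_unique:
  assumes sorted: "sorted (rev xs)" and nonneg: "\<And>i. i < length xs \<Longrightarrow> 0 \<le> xs ! i"
    and j: "1 \<le> j" "j \<le> length xs"
  shows "\<exists>!k. k \<le> j - 1 \<and> (k = 0 \<or> tail_mean j xs k < xs ! (k - 1)) \<and> xs ! k \<le> tail_mean j xs k"
proof -
  let ?P = "\<lambda>k. xs ! k \<le> tail_mean j xs k"
  have "xs ! (j - 1) \<le> (\<Sum>i\<in>{j - 1..<length xs}. xs ! i)"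
    by (rule member_le_sum) (use nonneg j in auto)
  moreover have "real (j - (j - 1)) = 1" using j by simp
  ultimately have P_last: "?P (j - 1)" unfolding tail_mean_def by simp
  have propagate: "?P m" if "k \<le> m" "m < j" "?P k" for k m
    using that
  proof (induction m rule: dec_induct)
    case (step m)
    then have "xs ! m \<le> tail_mean j xs (Suc m)" using tail_mean_Suc_iff j by simp
    then show ?case using sorted_rev_nth_mono[OF sorted, of m "Suc m"] step.prems j by simp
  qed simp
  define k0 where "k0 = (LEAST k. ?P k)"
  have P_k0: "?P k0" unfolding k0_def by (rule LeastI[of ?P, OF P_last])
  have k0_le: "k0 \<le> j - 1" unfolding k0_def by (rule Least_le[of ?P, OF P_last])
  have k0_cond: "k0 = 0 \<or> tail_mean j xs k0 < xs ! (k0 - 1)"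
  proof (cases k0)
    case (Suc m)
    then have "\<not> ?P m" using not_less_Least[of m ?P] unfolding k0_def by auto
    then show ?thesis using tail_mean_Suc_iff[of m j xs] Suc k0_le j by auto
  qed simp
  have no_later: "\<not> k < k'"
    if "?P k" "k' \<le> j - 1" "k' = 0 \<or> tail_mean j xs k' < xs ! (k' - 1)" for k k'
  proof
    assume "k < k'"
    then obtain m where k': "k' = Suc m" "k \<le> m" by (cases k') auto
    then have "?P m" using propagate[OF _ _ that(1)] that(2) j by simp
    then have "xs ! m \<le> tail_mean j xs k'" using tail_mean_Suc_iff[of m j xs] k' that(2) j by simp
    then show False using that(3) k' by simp
  qed
  show ?thesis
  proof (rule ex1I[of _ k0])
    fix k assume "k \<le> j - 1 \<and> (k = 0 \<or> tail_mean j xs k < xs ! (k - 1)) \<and> ?P k"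
    then show "k = k0" using no_later[of k k0] no_later[of k0 k] k0_le k0_cond P_k0 by simp
  qed (use k0_le k0_cond P_k0 in simp)
qed

lemma trace_orth_diag_same:
  assumes U: "orth_mat n U" and w: "length w = n" and x: "length x = n"
  shows "mat_trace ((U * diag_of_list w * U\<^sup>T) * (U * diag_of_list x * U\<^sup>T)) = (\<Sum>m<n. w ! m * x ! m)"
proof -
  have "(\<Sum>l<n. \<Sum>m<n. w ! l * x ! m * (\<Sum>a<n. U $$ (a, l) * U $$ (a, m))\<^sup>2)
      = (\<Sum>l<n. \<Sum>m<n. if l = m then w ! l * x ! m else 0)"
    by (intro sum.cong refl) (simp add: orth_mat_cols[OF U])
  then show ?thesis using trace_orth_diag_mult[OF U U x w] by simp
qed

lemma orth_diag_rank_ge_imp_pos: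
  assumes U: "orth_mat n U" and xs: "length xs = n" "sorted (rev xs)"
    and nonneg: "\<And>i. i < n \<Longrightarrow> 0 \<le> xs ! i" and j: "1 \<le> j" "j \<le> n"
    and rank: "vec_space.rank n (U * diag_of_list xs * U\<^sup>T) \<ge> j"
  shows "0 < xs ! (j - 1)"
proof (rule ccontr)
  assume "\<not> 0 < xs ! (j - 1)"
  then have last_zero: "xs ! (j - 1) = 0" using nonneg[of "j - 1"] j by simp
  have "xs ! m = 0" if "j - 1 \<le> m" "m < n" for m
  proof -
    have "xs ! m \<le> xs ! (j - 1)" using sorted_rev_nth_mono[OF xs(2) that(1)] that(2) xs(1) by simp
    then show ?thesis using last_zero nonneg[OF that(2)] by simp
  qed
  then have "vec_space.rank n (U * diag_of_list xs * U\<^sup>T) \<le> j - 1"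
    by (rule rank_orth_diag_le[OF U xs(1)])
  then show False using rank j by simp
qed

lemma neg_mem_subdiff_Delta:
  assumes W: "W \<in> carrier_mat d d" and X: "sym_mat d X"
    and trace_WX: "mat_trace (W * X) = real j"
    and bound: "\<And>Z. pd_mat d Z \<Longrightarrow> real j + Delta j W \<le> mat_trace (Z * X) + Delta j Z"
  shows "- X \<in> subdiff_Delta d j W"
  unfolding subdiff_Delta_def
proof (intro CollectI conjI allI impI)
  have Xc: "X \<in> carrier_mat d d" and Xs: "X\<^sup>T = X" using X unfolding sym_mat_def by auto
  then show "sym_mat d (- X)" unfolding sym_mat_def by (simp add: transpose_uminus)
  fix Z assume Z: "pd_mat d Z"
  then have Zc: "Z \<in> carrier_mat d d" unfolding pd_mat_def sym_mat_def by simp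
  have c: "Z - W \<in> carrier_mat d d" "- X \<in> carrier_mat d d" using Zc W Xc by auto
  have "mat_trace ((Z - W) * (- X)) = mat_trace (W * X) - mat_trace (Z * X)"
    unfolding mat_trace_mult[OF W Xc] mat_trace_mult[OF Zc Xc] mat_trace_mult[OF c]
    using Zc W Xc by (simp add: sum_subtractf[symmetric] algebra_simps)
  then show "Delta j W + mat_trace ((Z - W) * - X) \<le> Delta j Z"
    using bound[OF Z] trace_WX by simp
qed

section \<open>The certificate\<close>

text \<open>\<open>xs\<close> lists the eigenvalues of \<open>X\<close> in decreasing order, 0-based: \<open>xs ! i\<close> is \<open>x\<^sub>(\<^sub>i\<^sub>+\<^sub>1\<^sub>)\<close>.
  Then \<open>cut\<close> and \<open>level\<close> are the \<open>k\<close> and \<open>(\<Sum>\<^sub>i\<^sub>>\<^sub>k x\<^sub>(\<^sub>i\<^sub>))/(j - k)\<close> of the definition of \<open>\<gamma>\<^sub>j\<close>, and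
  \<open>dual\<close> is the spectrum of the certificate \<open>W\<close>.\<close>

locale ordered_spectrum =
  fixes j :: nat and xs :: "real list"
  assumes sorted_rev: "sorted (rev xs)"
    and nonneg: "\<And>i. i < length xs \<Longrightarrow> 0 \<le> xs ! i"
    and j_pos: "1 \<le> j" and j_le: "j \<le> length xs"
    and pos: "0 < xs ! (j - 1)"
begin

definition cut :: nat where "cut = gamma_k j (rev xs)"

definition level :: real where "level = tail_mean j xs cut"

definition log_value :: real where
  "log_value = (\<Sum>i<cut. ln (xs ! i)) + real (j - cut) * ln level"

lemma cut_spec: "cut < j" "xs ! cut \<le> level" "0 < cut \<Longrightarrow> level < xs ! (cut - 1)"
proof -
  have "cut \<le> j - 1 \<and> (cut = 0 \<or> level < xs ! (cut - 1)) \<and> xs ! cut \<le> level"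
    unfolding cut_def level_def gamma_k_rev_sorted[OF sorted_rev]
    by (rule theI'[OF gamma_cut_unique[OF sorted_rev nonneg j_pos j_le]])
  then show "cut < j" "xs ! cut \<le> level" "0 < cut \<Longrightarrow> level < xs ! (cut - 1)"
    using j_pos by auto
qed

lemma pos_below_j:
  assumes "i < j"
  shows "0 < xs ! i"
proof -
  have "xs ! (j - 1) \<le> xs ! i" by (rule sorted_rev_nth_mono[OF sorted_rev]) (use assms j_le in auto)
  then show ?thesis using pos by simp
qed

lemma pos_below_cut: "i < cut \<Longrightarrow> 0 < xs ! i"
  using pos_below_j cut_spec(1) by simp

lemma level_eq: "level = (\<Sum>i\<in>{cut..<length xs}. xs ! i) / real (j - cut)"
  unfolding level_def tail_mean_def ..

lemma level_pos: "0 < level"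
proof -
  have "xs ! (j - 1) \<le> (\<Sum>i\<in>{cut..<length xs}. xs ! i)"
    by (rule member_le_sum) (use nonneg j_pos j_le cut_spec(1) in auto)
  then show ?thesis unfolding level_def tail_mean_def using pos cut_spec(1) by simp
qed

lemma gamma_eq: "gamma j (rev xs) = ereal log_value"
proof -
  have "(\<Sum>i\<in>{1..cut}. eln (ord_coord (rev xs) i)) = (\<Sum>i<cut. ereal (ln (xs ! i)))"
  proof -
    have "{1..cut} = {Suc 0..<Suc cut}" by auto
    then have "(\<Sum>i\<in>{1..cut}. eln (ord_coord (rev xs) i)) = (\<Sum>i<cut. eln (ord_coord (rev xs) (Suc i)))"
      by (simp only: sum.shift_bounds_Suc_ivl lessThan_atLeast0)
    also have "\<dots> = (\<Sum>i<cut. ereal (ln (xs ! i)))"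
    proof (intro sum.cong refl)
      fix i assume "i \<in> {..<cut}"
      then have "0 < xs ! i" using pos_below_cut by simp
      then show "eln (ord_coord (rev xs) (Suc i)) = ereal (ln (xs ! i))"
        by (simp add: ord_coord_rev_sorted[OF sorted_rev] eln_def)
    qed
    finally show ?thesis .
  qed
  moreover have "eln level = ereal (ln level)" unfolding eln_def using level_pos by simp
  ultimately show ?thesis
    unfolding gamma_def Let_def cut_def[symmetric] sum_ord_coord_rev_sorted[OF sorted_rev]
      tail_mean_def[symmetric] level_def[symmetric] log_value_def
    by (simp add: sum_ereal)
qed

definition dual :: "real list" where
  "dual = map (\<lambda>m. if m < cut then 1 / xs ! m else 1 / level) [0..<length xs]"

lemma length_dual [simp]: "length dual = length xs"
  unfolding dual_def by simp

lemma nth_dual: "m < length xs \<Longrightarrow> dual ! m = (if m < cut then 1 / xs ! m else 1 / level)"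
  unfolding dual_def by simp

lemma dual_pos: "m < length xs \<Longrightarrow> 0 < dual ! m"
  using nth_dual pos_below_cut[of m] level_pos by simp

lemma sorted_dual: "sorted dual"
proof (rule sorted_iff_nth_mono[THEN iffD2], intro allI impI)
  fix m m' assume mm: "m \<le> m'" "m' < length dual"
  then have "m' < length xs" by simp
  have "xs ! m' \<le> xs ! m" using sorted_rev_nth_mono[OF sorted_rev mm(1)] mm by simp
  moreover have "level \<le> xs ! m" if "m < cut"
  proof -
    have "xs ! (cut - 1) \<le> xs ! m"
      by (rule sorted_rev_nth_mono[OF sorted_rev]) (use that cut_spec(1) j_le in auto)
    then show ?thesis using cut_spec(3) that by simp
  qed
  ultimately show "dual ! m \<le> dual ! m'"
    using nth_dual mm pos_below_cut level_pos \<open>m' < length xs\<close>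
    by (auto simp: frac_le)
qed

lemma sum_ln_dual: "(\<Sum>i<j. ln (dual ! i)) = - log_value"
proof -
  have "(\<Sum>i<j. ln (dual ! i)) = (\<Sum>i<cut. ln (dual ! i)) + (\<Sum>i\<in>{cut..<j}. ln (dual ! i))"
    by (rule sum_lessThan_split) (use cut_spec(1) in simp)
  also have "(\<Sum>i<cut. ln (dual ! i)) = - (\<Sum>i<cut. ln (xs ! i))"
    using nth_dual pos_below_cut cut_spec(1) j_le by (auto simp: ln_div sum_negf[symmetric] intro!: sum.cong)
  also have "(\<Sum>i\<in>{cut..<j}. ln (dual ! i)) = - (real (j - cut) * ln level)"
    using nth_dual level_pos cut_spec(1) j_le by (simp add: ln_div)
  finally show ?thesis unfolding log_value_def by simp
qed

lemma sum_dual_mult: "(\<Sum>m<length xs. dual ! m * xs ! m) = real j"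
proof -
  have "(\<Sum>m<length xs. dual ! m * xs ! m)
      = (\<Sum>m<cut. dual ! m * xs ! m) + (\<Sum>m\<in>{cut..<length xs}. dual ! m * xs ! m)"
    by (rule sum_lessThan_split) (use cut_spec(1) j_le in simp)
  also have "(\<Sum>m<cut. dual ! m * xs ! m) = (\<Sum>m<cut. 1)"
  proof (intro sum.cong refl)
    fix m assume "m \<in> {..<cut}"
    then show "dual ! m * xs ! m = 1" using nth_dual[of m] pos_below_cut[of m] cut_spec(1) j_le by simp
  qed
  also have "(\<Sum>m\<in>{cut..<length xs}. dual ! m * xs ! m) = (\<Sum>m\<in>{cut..<length xs}. xs ! m) / level"
    using nth_dual by (auto simp: sum_divide_distrib intro!: sum.cong)
  also have "\<dots> = real (j - cut)"
    using level_pos cut_spec(1) unfolding level_def tail_mean_def by (simp add: field_simps)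
  finally show ?thesis using cut_spec(1) by simp
qed

text \<open>Diagonalise \<open>Z = V diag(\<mu>) V\<^sup>T\<close>; the squared overlaps of the eigenbases form a doubly
  stochastic matrix, which reduces the claim to the scalar inequality for \<open>\<Sum> \<mu>\<^sub>i x\<^sub>i\<close>.\<close>

lemma trace_lower_bound:
  assumes U: "orth_mat (length xs) U" and Z: "pd_mat (length xs) Z"
  shows "real j + log_value \<le> mat_trace (Z * (U * diag_of_list xs * U\<^sup>T)) + Delta j Z"
proof -
  let ?d = "length xs"
  have Zc: "Z \<in> carrier_mat ?d ?d" and Zs: "Z\<^sup>T = Z" using Z unfolding pd_mat_def sym_mat_def by auto
  define mu where "mu = eigvals Z"
  have mu: "sorted mu" "length mu = ?d" unfolding mu_def using eigvals_sym_mat[OF Zc Zs] by auto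
  obtain V where V: "orth_mat ?d V" and Z_eq: "Z = V * diag_of_list mu * V\<^sup>T"
    using sym_mat_orth_diagonalization[OF Zc Zs, of mu] unfolding mu_def by auto
  have mu_pos: "\<And>i. i < ?d \<Longrightarrow> 0 < mu ! i" using Z orth_diag_pd_iff[OF V mu(2)] Z_eq by simp
  have mu_mono: "\<And>i i'. i \<le> i' \<Longrightarrow> i' < ?d \<Longrightarrow> mu ! i \<le> mu ! i'"
    using mu by (simp add: sorted_nth_mono)
  have xs_anti: "\<And>i i'. i \<le> i' \<Longrightarrow> i' < ?d \<Longrightarrow> xs ! i' \<le> xs ! i"
    using sorted_rev_nth_mono[OF sorted_rev] by blast
  define M where "M l m = (\<Sum>a<?d. V $$ (a, l) * U $$ (a, m))\<^sup>2" for l m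
  have "(\<Sum>l<?d. mu ! l * xs ! l) \<le> (\<Sum>l<?d. \<Sum>m<?d. mu ! l * xs ! m * M l m)"
    by (rule sum_mult_le_doubly_stochastic[OF mu_mono xs_anti nonneg])
      (auto simp: M_def orth_overlap_doubly_stochastic[OF U V])
  also have "\<dots> = mat_trace (Z * (U * diag_of_list xs * U\<^sup>T))"
    unfolding Z_eq M_def by (rule trace_orth_diag_mult[OF U V refl mu(2), symmetric])
  finally have "real j + (\<Sum>i<j. ln (mu ! i)) + log_value \<le> mat_trace (Z * (U * diag_of_list xs * U\<^sup>T))"
    using weighted_sum_ge_log_bound[where mu = "(!) mu" and x = "(!) xs",
        OF mu_mono mu_pos xs_anti nonneg cut_spec(1) j_le pos_below_cut level_eq level_pos cut_spec(2)]
    unfolding log_value_def by simp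
  then show ?thesis unfolding Delta_def mu_def by simp
qed

lemma certificate:
  assumes U: "orth_mat (length xs) U"
  defines "W \<equiv> U * diag_of_list dual * U\<^sup>T"
  shows "pd_mat (length xs) W" "Delta j W = log_value"
    and "mat_trace (W * (U * diag_of_list xs * U\<^sup>T)) = real j"
proof -
  show "pd_mat (length xs) W" unfolding W_def using orth_diag_pd_iff[OF U] dual_pos by simp
  show "Delta j W = log_value"
    unfolding Delta_def W_def eigvals_orth_diag[OF U length_dual sorted_dual] using sum_ln_dual by simp
  show "mat_trace (W * (U * diag_of_list xs * U\<^sup>T)) = real j"
    unfolding W_def trace_orth_diag_same[OF U length_dual refl] by (rule sum_dual_mult)
qed

end

theorem lemma4p5:
  fixes d j :: nat and X :: "real mat"
  assumes "1 \<le> j" and "j \<le> d"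
    and "psd_mat d X"
    and "vec_space.rank d X \<ge> j"
  shows "\<exists>W. pd_mat d W \<and> - X \<in> subdiff_Delta d j W \<and> Gamma j X = ereal (Delta j W)"
proof -
  have X: "X \<in> carrier_mat d d" "X\<^sup>T = X" using assms(3) unfolding psd_mat_def sym_mat_def by auto
  define xs where "xs = rev (eigvals X)"
  have xs: "length xs = d" "sorted (rev xs)" unfolding xs_def using eigvals_sym_mat[OF X] by auto
  obtain U where U: "orth_mat d U" and X_eq: "X = U * diag_of_list xs * U\<^sup>T"
    using sym_mat_orth_diagonalization[OF X, of xs] unfolding xs_def by auto
  have nonneg: "\<And>i. i < d \<Longrightarrow> 0 \<le> xs ! i"
    using orth_diag_psd_nonneg[OF _ U xs(1)] assms(3) X_eq by simp
  interpret ordered_spectrum j xs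
    using orth_diag_rank_ge_imp_pos[OF U xs nonneg assms(1,2)] assms xs nonneg X_eq
    by unfold_locales auto
  have U': "orth_mat (length xs) U" using U xs(1) by simp
  define W where "W = U * diag_of_list dual * U\<^sup>T"
  have W: "pd_mat d W" "Delta j W = log_value" "mat_trace (W * X) = real j"
    using certificate[OF U'] xs(1) unfolding W_def X_eq by simp_all
  have "- X \<in> subdiff_Delta d j W"
  proof (rule neg_mem_subdiff_Delta[OF _ _ W(3)])
    show "real j + Delta j W \<le> mat_trace (Z * X) + Delta j Z" if "pd_mat d Z" for Z
      using trace_lower_bound[OF U'] that X_eq xs(1) W(2) by simp
  qed (use W(1) assms(3) in \<open>auto simp: pd_mat_def psd_mat_def sym_mat_def\<close>)
  moreover have "Gamma j X = ereal (Delta j W)" unfolding Gamma_def W(2) using gamma_eq xs_def by simp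
  ultimately show ?thesis using W(1) by blast
qed

end
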